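(* Let $\mathcal M=\{\rho_\theta:\theta\in\Theta\}$ be a two-parameter qubit model satisfying the regularity conditions and $\theta\in\Theta$. The following are equivalent: (i) $C_\theta^H[W]=C_\theta^S[W]$ for all $2\times2$ real positive definite matrices $W$; (ii) $\mathrm{Im}\,Z_\theta=0$; (iii) there exists a $2\times2$ real positive definite matrix $W_0$ with $C_\theta^H[W_0]=C_\theta^S[W_0]$.
   Context: Two-parameter qubit model: density matrices $\rho_\theta$ on $\mathbb C^2$, $\theta=(\theta^1,\theta^2)\in\Theta\subset\mathbb R^2$ open; regularity: each $\rho_\theta$ strictly positive, smooth in $\theta$, $\partial_1\rho_\theta,\partial_2\rho_\theta$ linearly independent ($\partial_i=\partial/\partial\theta^i$). SLD operators $L_{\theta,i}$ are the hermitian solutions of $\partial_i\rho_\theta=\tfrac12(\rho_\theta L_{\theta,i}+L_{\theta,i}\rho_\theta)$; SLD Fisher matrix $G_\theta=[\mathrm{tr}(\rho_\theta\tfrac12\{L_{\theta,i},L_{\theta,j}\})]$; SLD dual operators $L_\theta^i=\sum_j(G_\theta^{-1})^{ji}L_{\theta,j}$; $Z_\theta=[\mathrm{tr}(\rho_\theta L_\theta^jL_\theta^i)]_{i,j}$ and $\mathrm{Im}\,Z_\theta$ its entrywise imaginary part. SLD CR bound: $C_\theta^S[W]=\mathrm{Tr}(WG_\theta^{-1})$. Holevo bound: $C_\theta^H[W]=\min_{\vec X}\{\mathrm{Tr}(W\,\mathrm{Re}\,Z_\theta[\vec X])+\mathrm{TrAbs}(W\,\mathrm{Im}\,Z_\theta[\vec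 X])\}$ over pairs $\vec X=(X^1,X^2)$ of hermitian operators with $\mathrm{tr}(\rho_\theta X^i)=0$, $\mathrm{tr}(\partial_i\rho_\theta X^j)=\delta^j_i$, where $Z_\theta[\vec X]=[\mathrm{tr}(\rho_\theta X^jX^i)]_{i,j}$ and $\mathrm{TrAbs}$ of a diagonalizable matrix is the sum of absolute values of its eigenvalues. *)

theory Defs
  imports "HOL-Analysis.Analysis" "HOL-Computational_Algebra.Polynomial"
begin

type_synonym cmat = "complex^2^2"
type_synonym rmat = "real^2^2"

definition adj :: "cmat \<Rightarrow> cmat" where
  "adj A = (\<chi> i j. cnj (A $ j $ i))"

definition hermitian :: "cmat \<Rightarrow> bool" where
  "hermitian A \<longleftrightarrow> adj A = A"

definition strictly_positive :: "cmat \<Rightarrow> bool" where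
  "strictly_positive A \<longleftrightarrow> hermitian A \<and>
     (\<forall>v::complex^2. v \<noteq> 0 \<longrightarrow> 0 < Re (\<Sum>i\<in>UNIV. cnj (v $ i) * (A *v v) $ i))"

definition density_matrix :: "cmat \<Rightarrow> bool" where
  "density_matrix A \<longleftrightarrow> hermitian A \<and> trace A = 1 \<and>
     (\<forall>v::complex^2. 0 \<le> Re (\<Sum>i\<in>UNIV. cnj (v $ i) * (A *v v) $ i))"

definition pd :: "2 \<Rightarrow> (real^2 \<Rightarrow> 'b::real_normed_vector) \<Rightarrow> real^2 \<Rightarrow> 'b" where
  "pd i f x = vector_derivative (\<lambda>t. f (x + t *\<^sub>R axis i 1)) (at 0)"

fun ipd :: "2 list \<Rightarrow> (real^2 \<Rightarrow> 'b::real_normed_vector) \<Rightarrow> real^2 \<Rightarrow> 'b" where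
  "ipd [] f = f"
| "ipd (i # is) f = pd i (ipd is f)"

definition smooth_on :: "(real^2) set \<Rightarrow> (real^2 \<Rightarrow> 'b::real_normed_vector) \<Rightarrow> bool" where
  "smooth_on S f \<longleftrightarrow> (\<forall>is. \<forall>x\<in>S. ipd is f differentiable (at x))"

definition regular_qubit_model :: "(real^2) set \<Rightarrow> (real^2 \<Rightarrow> cmat) \<Rightarrow> bool" where
  "regular_qubit_model \<Theta> \<rho> \<longleftrightarrow> open \<Theta> \<and>
     (\<forall>\<theta>\<in>\<Theta>. density_matrix (\<rho> \<theta>) \<and> strictly_positive (\<rho> \<theta>)) \<and>
     smooth_on \<Theta> \<rho> \<and>
     (\<forall>\<theta>\<in>\<Theta>. \<forall>a b::real. a *\<^sub>R pd 0 \<rho> \<theta> + b *\<^sub>R pd 1 \<rho> \<theta> = 0 \<longrightarrow> a = 0 \<and> b = 0)"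

definition SLD :: "(real^2 \<Rightarrow> cmat) \<Rightarrow> real^2 \<Rightarrow> 2 \<Rightarrow> cmat" where
  "SLD \<rho> \<theta> i = (THE L. hermitian L \<and>
      pd i \<rho> \<theta> = (1/2::real) *\<^sub>R (\<rho> \<theta> ** L + L ** \<rho> \<theta>))"

(* SLD Fisher information matrix (its entries are real) *)
definition SLD_Fisher :: "(real^2 \<Rightarrow> cmat) \<Rightarrow> real^2 \<Rightarrow> rmat" where
  "SLD_Fisher \<rho> \<theta> = (\<chi> i j. Re (trace (\<rho> \<theta> **
      ((1/2::real) *\<^sub>R (SLD \<rho> \<theta> i ** SLD \<rho> \<theta> j + SLD \<rho> \<theta> j ** SLD \<rho> \<theta> i)))))"

definition SLD_dual :: "(real^2 \<Rightarrow> cmat) \<Rightarrow> real^2 \<Rightarrow> 2 \<Rightarrow> cmat" where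
  "SLD_dual \<rho> \<theta> i = (\<Sum>j\<in>UNIV. (matrix_inv (SLD_Fisher \<rho> \<theta>) $ j $ i) *\<^sub>R SLD \<rho> \<theta> j)"

definition Zmat :: "cmat \<Rightarrow> (2 \<Rightarrow> cmat) \<Rightarrow> cmat" where
  "Zmat r X = (\<chi> i j. trace (r ** X j ** X i))"

definition Z_SLD :: "(real^2 \<Rightarrow> cmat) \<Rightarrow> real^2 \<Rightarrow> cmat" where
  "Z_SLD \<rho> \<theta> = Zmat (\<rho> \<theta>) (SLD_dual \<rho> \<theta>)"

definition ReM :: "cmat \<Rightarrow> rmat" where "ReM Z = (\<chi> i j. Re (Z $ i $ j))"
definition ImM :: "cmat \<Rightarrow> rmat" where "ImM Z = (\<chi> i j. Im (Z $ i $ j))"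

(* characteristic polynomial det(x I - M) of a real 2x2 matrix, over C *)
definition charpoly2 :: "rmat \<Rightarrow> complex poly" where
  "charpoly2 M = [: complex_of_real (det M), - complex_of_real (trace M), 1 :]"

(* sum of absolute values of the eigenvalues (with algebraic multiplicity) *)
definition TrAbs :: "rmat \<Rightarrow> real" where
  "TrAbs M = (\<Sum>z\<in>{z. poly (charpoly2 M) z = 0}. real (order z (charpoly2 M)) * cmod z)"

definition real_pos_def :: "rmat \<Rightarrow> bool" where
  "real_pos_def W \<longleftrightarrow> transpose W = W \<and> (\<forall>v::real^2. v \<noteq> 0 \<longrightarrow> 0 < v \<bullet> (W *v v))"

definition SLD_CR_bound :: "(real^2 \<Rightarrow> cmat) \<Rightarrow> real^2 \<Rightarrow> rmat \<Rightarrow> real" where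
  "SLD_CR_bound \<rho> \<theta> W = trace (W ** matrix_inv (SLD_Fisher \<rho> \<theta>))"

definition locally_unbiased :: "(real^2 \<Rightarrow> cmat) \<Rightarrow> real^2 \<Rightarrow> (2 \<Rightarrow> cmat) \<Rightarrow> bool" where
  "locally_unbiased \<rho> \<theta> X \<longleftrightarrow> (\<forall>i. hermitian (X i) \<and> trace (\<rho> \<theta> ** X i) = 0) \<and>
     (\<forall>i j. trace (pd i \<rho> \<theta> ** X j) = (if i = j then 1 else 0))"

definition holevo_fun :: "(real^2 \<Rightarrow> cmat) \<Rightarrow> real^2 \<Rightarrow> rmat \<Rightarrow> (2 \<Rightarrow> cmat) \<Rightarrow> real" where
  "holevo_fun \<rho> \<theta> W X = trace (W ** ReM (Zmat (\<rho> \<theta>) X)) + TrAbs (W ** ImM (Zmat (\<rho> \<theta>) X))"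

(* the minimum over locally unbiased X (as an infimum; it is attained) *)
definition holevo_bound :: "(real^2 \<Rightarrow> cmat) \<Rightarrow> real^2 \<Rightarrow> rmat \<Rightarrow> real" where
  "holevo_bound \<rho> \<theta> W = Inf {holevo_fun \<rho> \<theta> W X | X. locally_unbiased \<rho> \<theta> X}"

end

theory Submission
  imports Defs
begin

text \<open>The SLD duals \<open>L\<^sup>i\<close> are locally unbiased, and \<open>Re Z = G\<^sup>-\<^sup>1\<close>, so the Holevo function at
  \<open>L\<^sup>i\<close> is \<open>C\<^sup>S[W] + TrAbs (W Im Z)\<close>. For any locally unbiased \<open>X\<close> the deviations
  \<open>X\<^sup>i - L\<^sup>i\<close> are orthogonal to the \<open>L\<^sub>j\<close> for \<open>Re tr (\<rho> A B)\<close>, so \<open>Re Z[X]\<close> is \<open>G\<^sup>-\<^sup>1\<close>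
  plus their Gram matrix and the Holevo function is at least \<open>C\<^sup>S[W]\<close>; if \<open>Im Z = 0\<close> the
  minimum is attained at \<open>L\<^sup>i\<close>. For a \<open>2\<times>2\<close> antisymmetric \<open>Im Z[X]\<close> the \<open>TrAbs\<close> term is at least
  \<open>\<bar>Im Z[X]\<^sub>1\<^sub>2\<bar> \<surd>det W\<close>, and \<open>Im Z[X]\<^sub>1\<^sub>2\<close> moves from \<open>Im Z\<^sub>1\<^sub>2\<close> only as far as the deviations
  allow. Hence \<open>Im Z \<noteq> 0\<close> forces a uniform gap above \<open>C\<^sup>S[W]\<close> for every \<open>W\<close>.\<close>

lemma matrix_add_rdistrib:
  fixes A :: "'a::semiring_1^'n^'m"
  shows "(A + B) ** C = A ** C + B ** C"
  by (simp add: vec_eq_iff matrix_matrix_mult_def sum.distrib distrib_right)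

lemma matrix_diff_ldistrib:
  fixes A :: "'a::ring_1^'n^'m"
  shows "A ** (B - C) = A ** B - A ** C"
  by (simp add: vec_eq_iff matrix_matrix_mult_def sum_subtractf right_diff_distrib)

lemma matrix_diff_rdistrib:
  fixes A :: "'a::ring_1^'n^'m"
  shows "(A - B) ** C = A ** C - B ** C"
  by (simp add: vec_eq_iff matrix_matrix_mult_def sum_subtractf left_diff_distrib)

lemma matrix_scaleR_right:
  fixes A :: "'a::real_algebra_1^'n^'m"
  shows "A ** (c *\<^sub>R B) = c *\<^sub>R (A ** B)"
  by (simp add: matrix_scalar_ac scalar_matrix_assoc)

lemma trace_scaleR:
  fixes A :: "'a::real_algebra_1^'n^'n"
  shows "trace (c *\<^sub>R A) = c *\<^sub>R trace A"
  by (simp add: trace_def scaleR_sum_right)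

lemmas matrix_algebra_simps =
  matrix_add_ldistrib matrix_add_rdistrib matrix_diff_ldistrib matrix_diff_rdistrib
  scalar_matrix_assoc[symmetric] matrix_scaleR_right trace_add trace_sub trace_scaleR

lemma adj_nth [simp]: "adj A $ i $ j = cnj (A $ j $ i)"
  by (simp add: adj_def)

lemma adj_adj [simp]: "adj (adj A) = A"
  by (simp add: vec_eq_iff)

lemma adj_add: "adj (A + B) = adj A + adj B"
  and adj_diff: "adj (A - B) = adj A - adj B"
  and adj_uminus: "adj (- A) = - adj A"
  and adj_scaleR: "adj (c *\<^sub>R A) = c *\<^sub>R adj A"
  by (simp_all add: vec_eq_iff)

lemma adj_mult: "adj (A ** B) = adj B ** adj A"
  by (simp add: vec_eq_iff matrix_matrix_mult_def mult.commute)

lemma trace_adj: "trace (adj A) = cnj (trace A)"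
  by (simp add: trace_def)

lemma hermitian_mat_1: "hermitian (mat 1)"
  by (simp add: hermitian_def vec_eq_iff mat_def)

lemma hermitian_lincomb: "hermitian A \<Longrightarrow> hermitian B \<Longrightarrow> hermitian (a *\<^sub>R A + b *\<^sub>R B)"
  by (simp add: hermitian_def adj_add adj_scaleR)

lemma hermitian_diff: "hermitian A \<Longrightarrow> hermitian B \<Longrightarrow> hermitian (A - B)"
  by (simp add: hermitian_def adj_diff)

lemma hermitian_uminus: "hermitian A \<Longrightarrow> hermitian (- A)"
  by (simp add: hermitian_def adj_uminus)

lemma density_matrix_hermitian: "density_matrix r \<Longrightarrow> hermitian r"
  by (simp add: density_matrix_def)

text \<open>Multiplication by a complex scalar; \<open>cmat\<close> is only a real vector space.\<close>

definition scaleC :: "complex \<Rightarrow> cmat \<Rightarrow> cmat" where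
  "scaleC c M = (\<chi> i j. c * M $ i $ j)"

lemma scaleC_mult_left: "scaleC c M ** N = scaleC c (M ** N)"
  by (simp add: scaleC_def vec_eq_iff matrix_matrix_mult_def sum_distrib_left mult.assoc)

lemma scaleC_mult_right: "M ** scaleC c N = scaleC c (M ** N)"
  by (simp add: scaleC_def vec_eq_iff matrix_matrix_mult_def sum_distrib_left algebra_simps)

lemma trace_scaleC: "trace (scaleC c M) = c * trace M"
  by (simp add: scaleC_def trace_def sum_distrib_left)

lemma adj_scaleC: "adj (scaleC c M) = scaleC (cnj c) (adj M)"
  by (simp add: scaleC_def vec_eq_iff)

lemma scaleC_add: "scaleC c (M + N) = scaleC c M + scaleC c N"
  and scaleC_scaleR: "scaleC c (a *\<^sub>R N) = a *\<^sub>R scaleC c N"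
  and scaleC_scaleC: "scaleC c (scaleC d N) = scaleC (c * d) N"
  and scaleC_uminus: "scaleC (- c) N = - scaleC c N"
  by (simp_all add: scaleC_def vec_eq_iff algebra_simps)

lemma trace_mult_adj_eq_sum_columns:
  "trace (r ** C ** adj C) =
     (\<Sum>k\<in>UNIV. \<Sum>i\<in>UNIV. cnj (column k C $ i) * (r *v column k C) $ i)"
  by (simp add: trace_def matrix_matrix_mult_def matrix_vector_mult_def column_def sum_2
      algebra_simps)

lemma density_matrix_trace_mult_adj_nonneg:
  assumes "density_matrix r"
  shows "0 \<le> Re (trace (r ** C ** adj C))"
  using assms by (simp add: trace_mult_adj_eq_sum_columns density_matrix_def sum_nonneg)

lemma strictly_positive_trace_mult_adj_pos:
  assumes r: "strictly_positive r" and "C \<noteq> 0"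
  shows "0 < Re (trace (r ** C ** adj C))"
proof -
  define q where "q v = Re (\<Sum>i\<in>UNIV. cnj (v $ i) * (r *v v) $ i)" for v
  have q_nonneg: "0 \<le> q v" for v
    using r by (cases "v = 0") (auto simp: q_def strictly_positive_def)
  obtain k where "column k C \<noteq> 0"
    using \<open>C \<noteq> 0\<close> by (auto simp: vec_eq_iff column_def)
  then have "0 < q (column k C)"
    using r by (simp add: q_def strictly_positive_def)
  then have "0 < (\<Sum>k\<in>UNIV. q (column k C))"
    using q_nonneg by (intro sum_pos2[OF finite UNIV_I])
  then show ?thesis
    by (simp add: q_def trace_mult_adj_eq_sum_columns)
qed

definition rho_ip :: "cmat \<Rightarrow> cmat \<Rightarrow> cmat \<Rightarrow> complex" where
  "rho_ip r A B = trace (r ** A ** B)"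

lemma rho_ip_cnj:
  assumes "hermitian r" "hermitian A" "hermitian B"
  shows "rho_ip r B A = cnj (rho_ip r A B)"
proof -
  have "cnj (rho_ip r A B) = trace (adj (r ** A ** B))"
    by (simp add: rho_ip_def trace_adj)
  also have "adj (r ** A ** B) = B ** (A ** r)"
    using assms by (simp add: adj_mult hermitian_def matrix_mul_assoc)
  also have "trace (B ** (A ** r)) = trace (r ** B ** A)"
    by (metis matrix_mul_assoc trace_mul_sym)
  finally show ?thesis
    by (simp add: rho_ip_def)
qed

lemma Re_rho_ip_commute:
  "hermitian r \<Longrightarrow> hermitian A \<Longrightarrow> hermitian B \<Longrightarrow> Re (rho_ip r B A) = Re (rho_ip r A B)"
  using rho_ip_cnj[of r A B] by simp

lemma Im_rho_ip_commute:
  "hermitian r \<Longrightarrow> hermitian A \<Longrightarrow> hermitian B \<Longrightarrow> Im (rho_ip r B A) = - Im (rho_ip r A B)"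
  using rho_ip_cnj[of r A B] by simp

lemma Im_rho_ip_self: "hermitian r \<Longrightarrow> hermitian A \<Longrightarrow> Im (rho_ip r A A) = 0"
  using rho_ip_cnj[of r A A] by (auto simp: complex_eq_iff)

lemma rho_ip_add_left: "rho_ip r (A + B) C = rho_ip r A C + rho_ip r B C"
  and rho_ip_add_right: "rho_ip r A (B + C) = rho_ip r A B + rho_ip r A C"
  and rho_ip_diff_left: "rho_ip r (A - B) C = rho_ip r A C - rho_ip r B C"
  and rho_ip_diff_right: "rho_ip r A (B - C) = rho_ip r A B - rho_ip r A C"
  and rho_ip_scaleR_left: "rho_ip r (c *\<^sub>R A) B = c *\<^sub>R rho_ip r A B"
  and rho_ip_scaleR_right: "rho_ip r A (c *\<^sub>R B) = c *\<^sub>R rho_ip r A B"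
  by (simp_all add: rho_ip_def matrix_algebra_simps)

lemmas rho_ip_bilinear = rho_ip_add_left rho_ip_add_right rho_ip_diff_left rho_ip_diff_right
  rho_ip_scaleR_left rho_ip_scaleR_right

lemma Re_rho_ip_self_nonneg: "density_matrix r \<Longrightarrow> hermitian A \<Longrightarrow> 0 \<le> Re (rho_ip r A A)"
  using density_matrix_trace_mult_adj_nonneg[of r A] by (simp add: rho_ip_def hermitian_def)

lemma Re_rho_ip_self_pos:
  "strictly_positive r \<Longrightarrow> hermitian A \<Longrightarrow> A \<noteq> 0 \<Longrightarrow> 0 < Re (rho_ip r A A)"
  using strictly_positive_trace_mult_adj_pos[of r A] by (simp add: rho_ip_def hermitian_def)

lemma Re_rho_ip_lincomb_self:
  assumes "hermitian r" "hermitian A" "hermitian B"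
  shows "Re (rho_ip r (a *\<^sub>R A + b *\<^sub>R B) (a *\<^sub>R A + b *\<^sub>R B)) =
     a * a * Re (rho_ip r A A) + 2 * a * b * Re (rho_ip r A B) + b * b * Re (rho_ip r B B)"
  using Re_rho_ip_commute[OF assms] by (simp add: rho_ip_bilinear algebra_simps)

text \<open>Positivity of \<open>tr (r C C\<^sup>*)\<close> for \<open>C = \<alpha> A + i B\<close>.\<close>

lemma Im_rho_ip_le:
  assumes r: "density_matrix r" and A: "hermitian A" and B: "hermitian B" and "0 < \<alpha>"
  shows "2 * \<alpha> * \<bar>Im (rho_ip r A B)\<bar> \<le> \<alpha> * \<alpha> * Re (rho_ip r A A) + Re (rho_ip r B B)"
proof -
  have one_sign: "0 \<le> \<alpha> * \<alpha> * Re (rho_ip r A A) + Re (rho_ip r B B) + 2 * \<alpha> * Im (rho_ip r A B)"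
    if B: "hermitian B" for B
  proof -
    define C where "C = \<alpha> *\<^sub>R A + scaleC \<i> B"
    have adj_C: "adj C = \<alpha> *\<^sub>R A - scaleC \<i> B"
      using A B by (simp add: C_def adj_add adj_scaleR adj_scaleC hermitian_def scaleC_uminus)
    have "trace (r ** C ** adj C) = (\<alpha> * \<alpha>) *\<^sub>R rho_ip r A A - \<alpha> *\<^sub>R (\<i> * rho_ip r A B)
        + \<alpha> *\<^sub>R (\<i> * rho_ip r B A) + rho_ip r B B"
      unfolding adj_C unfolding C_def
      by (simp add: rho_ip_def matrix_algebra_simps scaleC_mult_left scaleC_mult_right
          scaleC_scaleC trace_scaleC scaleC_scaleR scaleC_add algebra_simps)
    also have "rho_ip r B A = cnj (rho_ip r A B)"
      using rho_ip_cnj[OF density_matrix_hermitian[OF r] A B] .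
    finally show ?thesis
      using density_matrix_trace_mult_adj_nonneg[OF r, of C] by simp
  qed
  have "rho_ip r A (- B) = - rho_ip r A B" "rho_ip r (- B) (- B) = rho_ip r B B"
    using rho_ip_scaleR_right[of r A "-1" B] rho_ip_scaleR_right[of r "- B" "-1" B]
      rho_ip_scaleR_left[of r "-1" B B] by simp_all
  then show ?thesis
    using one_sign[OF B] one_sign[OF hermitian_uminus[OF B]] by (simp add: abs_if)
qed

definition anticomm :: "cmat \<Rightarrow> cmat \<Rightarrow> cmat" where
  "anticomm r L = r ** L + L ** r"

lemma linear_anticomm: "linear (anticomm r)"
  by (rule linearI) (simp_all add: anticomm_def matrix_algebra_simps scaleR_add_right)

lemma anticomm_adj: "hermitian r \<Longrightarrow> anticomm r (adj L) = adj (anticomm r L)"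
  by (simp add: anticomm_def adj_add adj_mult hermitian_def add.commute)

text \<open>For normal \<open>M\<close>, \<open>tr (M\<^sup>* (r M + M r)) = 2 tr (r M M\<^sup>* )\<close>.\<close>

lemma anticomm_eq_0_hermitian_or_skew:
  assumes r: "strictly_positive r" and "anticomm r M = 0" and "adj M = M \<or> adj M = - M"
  shows "M = 0"
proof (rule ccontr)
  assume "M \<noteq> 0"
  have normal: "adj M ** M = M ** adj M"
    using assms(3) by (auto simp: vec_eq_iff matrix_matrix_mult_def)
  have "0 = trace (adj M ** anticomm r M)"
    using assms(2) by (simp add: trace_def)
  also have "\<dots> = trace (adj M ** r ** M) + trace (adj M ** M ** r)"
    by (simp add: anticomm_def matrix_add_ldistrib trace_add matrix_mul_assoc)
  also have "trace (adj M ** r ** M) = trace (r ** M ** adj M)"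
    by (metis matrix_mul_assoc trace_mul_sym)
  also have "trace (adj M ** M ** r) = trace (r ** M ** adj M)"
    by (metis normal matrix_mul_assoc trace_mul_sym)
  finally have "Re (trace (r ** M ** adj M)) = 0"
    by (simp add: complex_eq_iff)
  with strictly_positive_trace_mult_adj_pos[OF r \<open>M \<noteq> 0\<close>] show False
    by simp
qed

lemma anticomm_eq_0:
  assumes r: "strictly_positive r" and L: "anticomm r L = 0"
  shows "L = 0"
proof -
  have "hermitian r"
    using r by (simp add: strictly_positive_def)
  then have "anticomm r (adj L) = 0"
    using L anticomm_adj[of r L] by (simp add: vec_eq_iff)
  with L have "anticomm r (L + adj L) = 0" "anticomm r (L - adj L) = 0"
    using linear_add[OF linear_anticomm] linear_diff[OF linear_anticomm] by simp_all
  then have "L + adj L = 0" "L - adj L = 0"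
    using anticomm_eq_0_hermitian_or_skew[OF r, of "L + adj L"]
      anticomm_eq_0_hermitian_or_skew[OF r, of "L - adj L"]
    by (simp_all add: adj_add adj_diff add.commute)
  moreover have "(2::real) *\<^sub>R L = (L + adj L) + (L - adj L)"
    by (simp add: scaleR_2)
  ultimately show ?thesis
    by simp
qed

lemma bij_anticomm:
  assumes "strictly_positive r"
  shows "bij (anticomm r)"
proof -
  have "inj (anticomm r)"
    using anticomm_eq_0[OF assms] linear_anticomm by (simp add: linear_injective_0)
  then show ?thesis
    using linear_anticomm linear_injective_imp_surjective by (blast intro: bijI)
qed

lemma SLD_equation_unique_solution:
  assumes r: "strictly_positive r" and D: "hermitian D"
  shows "\<exists>!L. hermitian L \<and> D = (1/2::real) *\<^sub>R (r ** L + L ** r)"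
proof -
  have "hermitian r"
    using r by (simp add: strictly_positive_def)
  obtain L where L: "anticomm r L = (2::real) *\<^sub>R D"
    using bij_anticomm[OF r] by (metis bij_pointE)
  define H where "H = (1/2::real) *\<^sub>R (L + adj L)"
  have "anticomm r H = (1/2::real) *\<^sub>R (anticomm r L + anticomm r (adj L))"
    using linear_anticomm[of r] by (simp add: H_def linear_add linear_scale)
  also have "\<dots> = (2::real) *\<^sub>R D"
    using L D anticomm_adj[OF \<open>hermitian r\<close>, of L] by (simp add: hermitian_def adj_scaleR)
  finally have H: "anticomm r H = (2::real) *\<^sub>R D" .
  show ?thesis
  proof (rule ex1I[of _ H])
    show "hermitian H \<and> D = (1/2::real) *\<^sub>R (r ** H + H ** r)"
      using H by (simp add: H_def hermitian_def adj_scaleR adj_add add.commute anticomm_def[symmetric])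
  next
    fix M assume "hermitian M \<and> D = (1/2::real) *\<^sub>R (r ** M + M ** r)"
    then have "anticomm r (M - H) = 0"
      using H linear_diff[OF linear_anticomm] by (simp add: anticomm_def)
    then show "M = H"
      using anticomm_eq_0[OF r] by (metis eq_iff_diff_eq_0)
  qed
qed

lemma has_vector_derivative_pd:
  assumes "f differentiable (at x)"
  shows "((\<lambda>t. f (x + t *\<^sub>R axis i 1)) has_vector_derivative pd i f x) (at 0)"
proof -
  let ?line = "\<lambda>t::real. x + t *\<^sub>R axis i (1::real)"
  have "?line differentiable (at 0)"
    by (intro derivative_intros)
  then have "(f \<circ> ?line) differentiable (at 0)"
    using assms by (intro differentiable_chain_at) simp_all
  then have "(\<lambda>t. f (x + t *\<^sub>R axis i 1)) differentiable (at 0)"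
    by (simp add: o_def)
  then show ?thesis
    unfolding pd_def by (simp add: vector_derivative_works[symmetric])
qed

lemma pd_eq_0_if_linear_image_const:
  fixes f :: "real^2 \<Rightarrow> 'a::real_normed_vector" and g :: "'a \<Rightarrow> 'b::real_normed_vector"
  assumes "open S" "x \<in> S" "f differentiable (at x)" "bounded_linear g" "\<And>y. y \<in> S \<Longrightarrow> g (f y) = c"
  shows "g (pd i f x) = 0"
proof -
  let ?line = "\<lambda>t::real. x + t *\<^sub>R axis i (1::real)"
  have "((\<lambda>t. g (f (?line t))) has_vector_derivative g (pd i f x)) (at 0)"
    using bounded_linear.has_vector_derivative[OF assms(4) has_vector_derivative_pd[OF assms(3)]] .
  moreover have "((\<lambda>t. g (f (?line t))) has_vector_derivative 0) (at 0)"
  proof (rule has_vector_derivative_transform_within_open)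
    show "((\<lambda>t. c) has_vector_derivative 0) (at 0)"
      by (rule derivative_intros)
    show "open (?line -` S)"
      using assms(1) by (intro continuous_open_vimage continuous_intros)
  qed (use assms(2,5) in auto)
  ultimately show ?thesis
    by (rule vector_derivative_unique_at)
qed

lemma matrix_mult_matrix_inv:
  fixes A :: "'a::semiring_1^'n^'m"
  assumes "invertible A"
  shows "A ** matrix_inv A = mat 1"
  using someI_ex[OF assms[unfolded invertible_def]] by (simp add: matrix_inv_def)

lemma transpose_matrix_inv_symmetric:
  fixes A :: "'a::comm_semiring_1^'n^'n"
  assumes "invertible A" "transpose A = A"
  shows "transpose (matrix_inv A) = matrix_inv A"
proof -
  let ?B = "matrix_inv A"
  have "transpose ?B = transpose ?B ** (A ** ?B)"
    using matrix_mult_matrix_inv[OF assms(1)] by simp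
  also have "\<dots> = transpose (A ** ?B) ** ?B"
    using assms(2) by (simp add: matrix_mul_assoc matrix_transpose_mul)
  also have "\<dots> = ?B"
    using matrix_mult_matrix_inv[OF assms(1)] by simp
  finally show ?thesis .
qed

lemma trace_mult_2:
  fixes A :: "'a::comm_semiring_1^2^2"
  shows "trace (A ** B) = A$1$1 * B$1$1 + A$1$2 * B$2$1 + A$2$1 * B$1$2 + A$2$2 * B$2$2"
  by (simp add: trace_def matrix_matrix_mult_def sum_2 add_ac)

lemma real_pos_def_2:
  assumes "real_pos_def W"
  shows "W$1$2 = W$2$1" "0 < W$1$1" "0 < W$2$2" "0 < det W"
proof -
  have sym: "transpose W = W" and pos: "\<And>v. v \<noteq> 0 \<Longrightarrow> 0 < v \<bullet> (W *v v)"
    using assms by (auto simp: real_pos_def_def)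
  show e: "W$1$2 = W$2$1"
    using arg_cong[OF sym, of "\<lambda>M. M $ 1 $ 2"] by (simp add: transpose_def)
  have form: "vector [a, b] \<bullet> (W *v vector [a, b]) = a * a * W$1$1 + 2 * a * b * W$1$2 + b * b * W$2$2"
    for a b :: real
    using e by (simp add: inner_vec_def matrix_vector_mult_def sum_2 algebra_simps)
  have nonzero: "(vector [a, b] :: real^2) \<noteq> 0" if "a \<noteq> 0 \<or> b \<noteq> 0" for a b
    using that by (auto simp: vec_eq_iff forall_2)
  show W11: "0 < W$1$1"
    using pos[OF nonzero[of 1 0]] form[of 1 0] by simp
  show "0 < W$2$2"
    using pos[OF nonzero[of 0 1]] form[of 0 1] by simp
  have "0 < W$1$1 * (W$1$1 * W$2$2 - W$1$2 * W$1$2)"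
    using pos[OF nonzero[of "- W$1$2" "W$1$1"]] form[of "- W$1$2" "W$1$1"] W11
    by (simp add: algebra_simps)
  then show "0 < det W"
    using W11 e by (simp add: det_2 zero_less_mult_iff)
qed

lemma TrAbs_0: "TrAbs 0 = 0"
proof -
  have "charpoly2 0 = [:0, 0, 1:]"
    by (simp add: charpoly2_def det_2 trace_def)
  moreover have "{z. poly [:0, 0, 1:] z = 0} = {0::complex}"
    by auto
  ultimately show ?thesis
    by (simp add: TrAbs_def)
qed

text \<open>Here \<open>W A\<close> is traceless with determinant \<open>det W \<cdot> A\<^sub>1\<^sub>2\<^sup>2\<close>, so its eigenvalues are
  \<open>\<plusminus>i \<bar>A\<^sub>1\<^sub>2\<bar> \<surd>det W\<close>.\<close>

lemma TrAbs_mult_antisym_ge: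
  assumes "W$1$2 = W$2$1" "0 \<le> det W" "A$1$1 = 0" "A$2$2 = 0" "A$2$1 = - A$1$2"
  shows "\<bar>A$1$2\<bar> * sqrt (det W) \<le> TrAbs (W ** A)"
proof -
  define d where "d = det W * (A$1$2)\<^sup>2"
  define p where "p = [: complex_of_real d, 0, 1 :]"
  define z where "z = \<i> * complex_of_real (sqrt d)"
  have "d \<ge> 0"
    using assms by (simp add: d_def)
  have "det (W ** A) = d" "trace (W ** A) = 0"
    using assms by (simp_all add: d_def det_2 trace_def matrix_matrix_mult_def sum_2
        power2_eq_square algebra_simps)
  then have charpoly: "charpoly2 (W ** A) = p"
    by (simp add: charpoly2_def p_def)
  have "p \<noteq> 0"
    by (simp add: p_def)
  have "z * z = - complex_of_real d"
    using \<open>d \<ge> 0\<close> by (simp add: z_def algebra_simps flip: of_real_mult)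
  then have root: "poly p z = 0"
    by (simp add: p_def)
  then have "order z p \<noteq> 0"
    using \<open>p \<noteq> 0\<close> order_root by blast
  then have "cmod z \<le> real (order z p) * cmod z"
    by (simp add: mult_le_cancel_right1)
  also have "\<dots> \<le> (\<Sum>w\<in>{w. poly p w = 0}. real (order w p) * cmod w)"
    by (rule member_le_sum) (use root poly_roots_finite[OF \<open>p \<noteq> 0\<close>] in auto)
  also have "\<dots> = TrAbs (W ** A)"
    by (simp add: TrAbs_def charpoly)
  finally show ?thesis
    using \<open>d \<ge> 0\<close> assms(2) by (simp add: z_def norm_mult d_def real_sqrt_mult mult.commute)
qed

text \<open>With \<open>c = det W / tr W\<close>, the matrix \<open>W - c I\<close> is positive semidefinite (its determinant is
  \<open>c\<^sup>2\<close>), so pairing it with the positive semidefinite Gram matrix \<open>[y\<^sub>1 m; m y\<^sub>2]\<close> gives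
  \<open>tr (W Y) \<ge> c tr Y\<close>.\<close>

lemma trace_mult_psd_ge:
  fixes p q \<beta> y1 y2 m :: real
  assumes "0 < p" "0 < q" "0 < p*q - \<beta>*\<beta>" "0 \<le> y2"
    and psd: "\<And>u w. 0 \<le> u * u * y1 + 2 * u * w * m + w * w * y2"
  shows "(p*q - \<beta>*\<beta>) / (p+q) * (y1 + y2) \<le> p*y1 + 2*\<beta>*m + q*y2"
proof -
  define c where "c = (p*q - \<beta>*\<beta>) / (p+q)"
  have c: "c * (p+q) = p*q - \<beta>*\<beta>"
    using assms by (simp add: c_def)
  have "p*q - \<beta>*\<beta> < p*(p+q)"
    using mult_pos_pos[OF \<open>0 < p\<close> \<open>0 < p\<close>] zero_le_square[of \<beta>]
    unfolding distrib_left by linarith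
  then have "c * (p+q) < p * (p+q)" using c by simp
  then have "0 < p - c"
    using assms by simp
  have e: "(p-c)*(q-c) = c*c + \<beta>*\<beta>"
    using c by (simp add: algebra_simps)
  have "(p-c) * ((p-c)*y1 + 2*\<beta>*m + (q-c)*y2) =
      (p-c)*(p-c)*y1 + 2*(p-c)*\<beta>*m + ((p-c)*(q-c))*y2"
    by (simp add: algebra_simps)
  also have "\<dots> = ((p-c)*(p-c)*y1 + 2*(p-c)*\<beta>*m + \<beta>*\<beta>*y2) + (c*c)*y2"
    unfolding e by (simp add: algebra_simps)
  also have "\<dots> \<ge> 0"
    using psd[of "p-c" \<beta>] assms by simp
  finally have "0 \<le> (p-c)*y1 + 2*\<beta>*m + (q-c)*y2"
    using \<open>0 < p - c\<close> by (simp add: zero_le_mult_iff)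
  then show ?thesis
    by (simp add: c_def[symmetric] algebra_simps)
qed

locale regular_qubit_model_at =
  fixes \<Theta> :: "(real^2) set" and \<rho> :: "real^2 \<Rightarrow> cmat" and \<theta> :: "real^2"
  assumes regular: "regular_qubit_model \<Theta> \<rho>" and mem: "\<theta> \<in> \<Theta>"
begin

abbreviation "r \<equiv> \<rho> \<theta>"
abbreviation "L \<equiv> SLD \<rho> \<theta>"
abbreviation "G \<equiv> SLD_Fisher \<rho> \<theta>"
abbreviation "H \<equiv> matrix_inv G"
abbreviation "D \<equiv> SLD_dual \<rho> \<theta>"

lemma density_matrix: "density_matrix r"
  and strictly_positive: "strictly_positive r"
  using regular mem unfolding regular_qubit_model_def by blast+

lemma hermitian_rho: "hermitian r"
  using density_matrix by (rule density_matrix_hermitian)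

lemma differentiable_rho: "\<rho> differentiable (at \<theta>)"
  using regular mem unfolding regular_qubit_model_def smooth_on_def by (auto dest: spec[of _ "[]"])

lemma open_parameter_set: "open \<Theta>"
  using regular by (simp add: regular_qubit_model_def)

lemma density_matrix_at: "y \<in> \<Theta> \<Longrightarrow> density_matrix (\<rho> y)"
  using regular by (simp add: regular_qubit_model_def)

lemma hermitian_pd: "hermitian (pd i \<rho> \<theta>)"
proof -
  have "bounded_linear (\<lambda>A::cmat. adj A - A)"
    by (rule linear_conv_bounded_linear[THEN iffD1], rule linearI)
      (simp_all add: adj_add adj_scaleR algebra_simps)
  then have "adj (pd i \<rho> \<theta>) - pd i \<rho> \<theta> = 0"
    by (rule pd_eq_0_if_linear_image_const[OF open_parameter_set mem differentiable_rho _, where c = 0])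
      (simp add: density_matrix_at[unfolded density_matrix_def hermitian_def])
  then show ?thesis
    by (simp add: hermitian_def)
qed

lemma trace_pd: "trace (pd i \<rho> \<theta>) = 0"
proof -
  have "bounded_linear (\<lambda>A::cmat. trace A)"
    by (rule linear_conv_bounded_linear[THEN iffD1], rule linearI) (simp_all add: trace_add trace_scaleR)
  then show ?thesis
    by (rule pd_eq_0_if_linear_image_const[OF open_parameter_set mem differentiable_rho _, where c = 1])
      (simp add: density_matrix_at[unfolded density_matrix_def])
qed

lemma SLD: "hermitian (L i)" "pd i \<rho> \<theta> = (1/2::real) *\<^sub>R (r ** L i + L i ** r)"
  using theI'[OF SLD_equation_unique_solution[OF strictly_positive hermitian_pd[of i]]]
  by (simp_all add: SLD_def)

lemma trace_pd_mult:
  assumes "hermitian X"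
  shows "trace (pd i \<rho> \<theta> ** X) = Re (rho_ip r (L i) X)"
proof -
  have "trace (pd i \<rho> \<theta> ** X) = (1/2::real) *\<^sub>R (rho_ip r (L i) X + trace (L i ** r ** X))"
    by (simp add: SLD(2)[of i] rho_ip_def matrix_algebra_simps)
  also have "trace (L i ** r ** X) = rho_ip r X (L i)"
    by (metis rho_ip_def matrix_mul_assoc trace_mul_sym)
  also have "\<dots> = cnj (rho_ip r (L i) X)"
    using rho_ip_cnj[OF hermitian_rho SLD(1) assms] .
  finally show ?thesis
    by (simp add: complex_eq_iff)
qed

lemma SLD_Fisher_nth: "G $ i $ j = Re (rho_ip r (L i) (L j))"
  using Re_rho_ip_commute[OF hermitian_rho SLD(1) SLD(1), of j i]
  by (simp add: SLD_Fisher_def rho_ip_def matrix_algebra_simps matrix_mul_assoc)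

lemma trace_rho_SLD: "trace (r ** L i) = 0"
proof -
  have "rho_ip r (L i) (mat 1) = trace (r ** L i)" "rho_ip r (mat 1) (L i) = trace (r ** L i)"
    by (simp_all add: rho_ip_def)
  moreover have "Re (rho_ip r (L i) (mat 1)) = 0"
    using trace_pd_mult[OF hermitian_mat_1, of i] trace_pd[of i] by simp
  ultimately show ?thesis
    using rho_ip_cnj[OF hermitian_rho SLD(1) hermitian_mat_1, of i] by (simp add: complex_eq_iff)
qed

text \<open>The numeral \<open>0 :: 2\<close> denotes the same index as \<open>2\<close>, so \<open>pd 0\<close> in the regularity
  condition is the derivative matching \<open>L 2\<close>.\<close>

lemma SLD_independent:
  assumes "a *\<^sub>R L 1 + b *\<^sub>R L 2 = 0"
  shows "a = 0 \<and> b = 0"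
proof -
  have pd_eq: "pd i \<rho> \<theta> = (1/2::real) *\<^sub>R anticomm r (L j)" if "i = j" for i j
    using SLD(2) that by (simp add: anticomm_def)
  have "b *\<^sub>R pd 0 \<rho> \<theta> + a *\<^sub>R pd 1 \<rho> \<theta> =
      (1/2::real) *\<^sub>R anticomm r (a *\<^sub>R L 1 + b *\<^sub>R L 2)"
    using linear_anticomm[of r]
    by (simp add: pd_eq[of 0 2] pd_eq[of 1 1] linear_add linear_scale algebra_simps)
  also have "\<dots> = 0"
    using assms linear_anticomm[of r] by (simp add: linear_0)
  finally show ?thesis
    using regular mem unfolding regular_qubit_model_def by blast
qed

lemma real_pos_def_SLD_Fisher: "real_pos_def G"
  unfolding real_pos_def_def
proof
  show "transpose G = G"
    by (simp add: vec_eq_iff transpose_def SLD_Fisher_nth Re_rho_ip_commute[OF hermitian_rho SLD(1) SLD(1)])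
  show "\<forall>v. v \<noteq> 0 \<longrightarrow> 0 < v \<bullet> (G *v v)"
  proof (intro allI impI)
    fix v :: "real^2"
    assume "v \<noteq> 0"
    then have "v$1 *\<^sub>R L 1 + v$2 *\<^sub>R L 2 \<noteq> 0"
      using SLD_independent by (auto simp: vec_eq_iff forall_2)
    then have "0 < Re (rho_ip r (v$1 *\<^sub>R L 1 + v$2 *\<^sub>R L 2) (v$1 *\<^sub>R L 1 + v$2 *\<^sub>R L 2))"
      by (intro Re_rho_ip_self_pos[OF strictly_positive] hermitian_lincomb SLD(1))
    also have "\<dots> = v \<bullet> (G *v v)"
      unfolding Re_rho_ip_lincomb_self[OF hermitian_rho SLD(1) SLD(1)]
      by (simp add: inner_vec_def matrix_vector_mult_def sum_2 SLD_Fisher_nth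
          Re_rho_ip_commute[OF hermitian_rho SLD(1) SLD(1), of 1 2] algebra_simps)
    finally show "0 < v \<bullet> (G *v v)" .
  qed
qed

lemma invertible_SLD_Fisher: "invertible G"
  using real_pos_def_2(4)[OF real_pos_def_SLD_Fisher] invertible_det_nz by force

lemma SLD_Fisher_mult_inverse: "G ** H = mat 1"
  using invertible_SLD_Fisher by (rule matrix_mult_matrix_inv)

lemma SLD_Fisher_inverse_sym: "H $ i $ j = H $ j $ i"
proof -
  have "transpose H = H"
    using invertible_SLD_Fisher real_pos_def_SLD_Fisher
    by (intro transpose_matrix_inv_symmetric) (simp_all add: real_pos_def_def)
  from arg_cong[OF this, of "\<lambda>M. M $ j $ i"] show ?thesis
    by (simp add: transpose_def)
qed

lemma SLD_dual_eq: "D j = H$1$j *\<^sub>R L 1 + H$2$j *\<^sub>R L 2"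
  by (simp add: SLD_dual_def sum_2)

lemma hermitian_SLD_dual: "hermitian (D j)"
  unfolding SLD_dual_eq by (intro hermitian_lincomb SLD(1))

lemma Re_rho_ip_SLD_SLD_dual: "Re (rho_ip r (L k) (D j)) = (if k = j then 1 else 0)"
proof -
  have "Re (rho_ip r (L k) (D j)) = G$k$1 * H$1$j + G$k$2 * H$2$j"
    by (simp add: SLD_dual_eq rho_ip_bilinear SLD_Fisher_nth mult.commute)
  also have "\<dots> = (G ** H) $ k $ j"
    by (simp add: matrix_matrix_mult_def sum_2)
  finally show ?thesis
    by (simp add: SLD_Fisher_mult_inverse mat_def)
qed

lemma Re_rho_ip_SLD_duals: "Re (rho_ip r (D i) (D k)) = H$i$k"
proof -
  have "Re (rho_ip r (D i) (D k)) = H$1$i * Re (rho_ip r (L 1) (D k)) + H$2$i * Re (rho_ip r (L 2) (D k))"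
    by (simp add: SLD_dual_eq[of i] rho_ip_bilinear)
  also have "\<dots> = H$k$i"
    unfolding Re_rho_ip_SLD_SLD_dual using exhaust_2[of k] by auto
  finally show ?thesis
    using SLD_Fisher_inverse_sym by simp
qed

lemma trace_rho_SLD_dual: "trace (r ** D j) = 0"
  by (simp add: SLD_dual_eq matrix_algebra_simps trace_rho_SLD)

lemma locally_unbiased_SLD_dual: "locally_unbiased \<rho> \<theta> D"
  unfolding locally_unbiased_def
  by (simp add: hermitian_SLD_dual trace_rho_SLD_dual trace_pd_mult[OF hermitian_SLD_dual]
      Re_rho_ip_SLD_SLD_dual)

lemma locally_unbiased_hermitian: "locally_unbiased \<rho> \<theta> X \<Longrightarrow> hermitian (X j)"
  by (simp add: locally_unbiased_def)

lemma locally_unbiased_Re_rho_ip_SLD: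
  assumes "locally_unbiased \<rho> \<theta> X"
  shows "Re (rho_ip r (L k) (X j)) = (if k = j then 1 else 0)"
proof -
  have "trace (pd k \<rho> \<theta> ** X j) = (if k = j then 1 else 0)"
    using assms by (simp add: locally_unbiased_def)
  then show ?thesis
    by (simp add: trace_pd_mult[OF locally_unbiased_hermitian[OF assms]] split: if_splits)
qed

text \<open>Orthogonal to every \<open>L\<^sub>k\<close> by local unbiasedness, hence to every \<open>L\<^sup>i\<close>.\<close>

lemma Re_rho_ip_SLD_dual_deviation:
  assumes "locally_unbiased \<rho> \<theta> X"
  shows "Re (rho_ip r (D i) (X j - D j)) = 0"
proof -
  have "Re (rho_ip r (L k) (X j - D j)) = 0" for k
    using locally_unbiased_Re_rho_ip_SLD[OF assms] Re_rho_ip_SLD_SLD_dual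
    by (simp add: rho_ip_diff_right)
  then show ?thesis
    by (simp add: SLD_dual_eq[of i] rho_ip_bilinear)
qed

lemma hermitian_deviation:
  assumes "locally_unbiased \<rho> \<theta> X"
  shows "hermitian (X j - D j)"
  using locally_unbiased_hermitian[OF assms] hermitian_SLD_dual by (rule hermitian_diff)

lemma Re_rho_ip_locally_unbiased:
  assumes X: "locally_unbiased \<rho> \<theta> X"
  shows "Re (rho_ip r (X i) (X k)) = H$i$k + Re (rho_ip r (X i - D i) (X k - D k))"
proof -
  have "rho_ip r (X i) (X k) = rho_ip r (D i + (X i - D i)) (D k + (X k - D k))"
    by simp
  also have "\<dots> = rho_ip r (D i) (D k) + rho_ip r (D i) (X k - D k) + rho_ip r (X i - D i) (D k)
      + rho_ip r (X i - D i) (X k - D k)"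
    by (simp only: rho_ip_add_left rho_ip_add_right add_ac)
  finally show ?thesis
    using Re_rho_ip_SLD_duals Re_rho_ip_SLD_dual_deviation[OF X, of i k]
      Re_rho_ip_SLD_dual_deviation[OF X, of k i]
      Re_rho_ip_commute[OF hermitian_rho hermitian_SLD_dual hermitian_deviation[OF X, of i], of k]
    by simp
qed

lemma ReM_Z_SLD: "ReM (Z_SLD \<rho> \<theta>) = H"
  by (simp add: vec_eq_iff ReM_def Z_SLD_def Zmat_def rho_ip_def[symmetric] Re_rho_ip_SLD_duals
      SLD_Fisher_inverse_sym)

lemma ImM_Z_SLD_nth:
  "ImM (Z_SLD \<rho> \<theta>) $ 1 $ 1 = 0" "ImM (Z_SLD \<rho> \<theta>) $ 2 $ 2 = 0"
  "ImM (Z_SLD \<rho> \<theta>) $ 1 $ 2 = Im (rho_ip r (D 2) (D 1))"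
  "ImM (Z_SLD \<rho> \<theta>) $ 2 $ 1 = - Im (rho_ip r (D 2) (D 1))"
  using Im_rho_ip_self[OF hermitian_rho hermitian_SLD_dual]
    Im_rho_ip_commute[OF hermitian_rho hermitian_SLD_dual hermitian_SLD_dual, of 2 1]
  by (simp_all add: ImM_def Z_SLD_def Zmat_def rho_ip_def)

lemma ImM_Z_SLD_eq_0_iff: "ImM (Z_SLD \<rho> \<theta>) = 0 \<longleftrightarrow> Im (rho_ip r (D 2) (D 1)) = 0"
  using ImM_Z_SLD_nth by (auto simp: vec_eq_iff forall_2)

lemma holevo_fun_SLD_dual:
  "holevo_fun \<rho> \<theta> W D = SLD_CR_bound \<rho> \<theta> W + TrAbs (W ** ImM (Z_SLD \<rho> \<theta>))"
  by (simp add: holevo_fun_def SLD_CR_bound_def ReM_Z_SLD flip: Z_SLD_def)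

definition deviation_sq :: "(2 \<Rightarrow> cmat) \<Rightarrow> real" where
  "deviation_sq X = Re (rho_ip r (X 1 - D 1) (X 1 - D 1)) + Re (rho_ip r (X 2 - D 2) (X 2 - D 2))"

lemma deviation_sq_nonneg: "locally_unbiased \<rho> \<theta> X \<Longrightarrow> 0 \<le> deviation_sq X"
  using Re_rho_ip_self_nonneg[OF density_matrix hermitian_deviation] by (simp add: deviation_sq_def)

lemma holevo_fun_ge:
  assumes W: "real_pos_def W" and X: "locally_unbiased \<rho> \<theta> X"
  shows "SLD_CR_bound \<rho> \<theta> W + det W / (W$1$1 + W$2$2) * deviation_sq X
      + \<bar>Im (rho_ip r (X 2) (X 1))\<bar> * sqrt (det W) \<le> holevo_fun \<rho> \<theta> W X"
proof -
  define Y where "Y i = X i - D i" for i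
  have Y: "hermitian (Y i)" for i
    using hermitian_deviation[OF X] by (simp add: Y_def)
  define y1 y2 m where "y1 = Re (rho_ip r (Y 1) (Y 1))" and "y2 = Re (rho_ip r (Y 2) (Y 2))"
    and "m = Re (rho_ip r (Y 1) (Y 2))"
  have W_sym: "W$1$2 = W$2$1" and "0 < W$1$1" "0 < W$2$2" and "0 < det W"
    using real_pos_def_2[OF W] by auto
  have det_W: "det W = W$1$1 * W$2$2 - W$2$1 * W$2$1"
    using W_sym by (simp add: det_2)
  have "ReM (Zmat r X) $ k $ i = H$i$k + Re (rho_ip r (Y i) (Y k))" for i k
    using Re_rho_ip_locally_unbiased[OF X, of i k] by (simp add: ReM_def Zmat_def rho_ip_def Y_def)
  then have "trace (W ** ReM (Zmat r X)) = trace (W ** H) + (W$1$1 * y1 + 2 * W$2$1 * m + W$2$2 * y2)"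
    using SLD_Fisher_inverse_sym[of 1 2] W_sym Re_rho_ip_commute[OF hermitian_rho Y Y, of 1 2]
    by (simp add: trace_mult_2 y1_def y2_def m_def algebra_simps)
  moreover have "det W / (W$1$1 + W$2$2) * (y1 + y2) \<le> W$1$1 * y1 + 2 * W$2$1 * m + W$2$2 * y2"
    unfolding det_W
  proof (rule trace_mult_psd_ge)
    show "0 < W$1$1 * W$2$2 - W$2$1 * W$2$1"
      using \<open>0 < det W\<close> det_W by simp
    show "0 \<le> u * u * y1 + 2 * u * w * m + w * w * y2" for u w
      using Re_rho_ip_self_nonneg[OF density_matrix hermitian_lincomb[OF Y Y, of u 1 w 2]]
        Re_rho_ip_lincomb_self[OF hermitian_rho Y Y, of u 1 w 2]
      by (simp add: y1_def y2_def m_def)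
  qed (use \<open>0 < W$1$1\<close> \<open>0 < W$2$2\<close> Re_rho_ip_self_nonneg[OF density_matrix Y] in
      \<open>simp_all add: y2_def\<close>)
  moreover have "\<bar>Im (rho_ip r (X 2) (X 1))\<bar> * sqrt (det W) \<le> TrAbs (W ** ImM (Zmat r X))"
    using TrAbs_mult_antisym_ge[OF W_sym, of "ImM (Zmat r X)"] \<open>0 < det W\<close>
      Im_rho_ip_self[OF hermitian_rho locally_unbiased_hermitian[OF X]]
      Im_rho_ip_commute[OF hermitian_rho locally_unbiased_hermitian[OF X]
        locally_unbiased_hermitian[OF X], of 2 1]
    by (simp add: ImM_def Zmat_def rho_ip_def)
  ultimately show ?thesis
    unfolding holevo_fun_def SLD_CR_bound_def deviation_sq_def y1_def y2_def Y_def by linarith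
qed

lemma Im_rho_ip_locally_unbiased_le:
  assumes X: "locally_unbiased \<rho> \<theta> X" and "0 < \<alpha>"
  shows "2 * \<alpha> * \<bar>Im (rho_ip r (X 2) (X 1)) - Im (rho_ip r (D 2) (D 1))\<bar>
    \<le> \<alpha> * \<alpha> * (H$1$1 + H$2$2) + (1 + \<alpha>) * deviation_sq X"
proof -
  define Y where "Y i = X i - D i" for i
  have Y: "hermitian (Y i)" for i
    using hermitian_deviation[OF X] by (simp add: Y_def)
  have D: "hermitian (D i)" for i
    by (rule hermitian_SLD_dual)
  define y1 y2 where "y1 = Re (rho_ip r (Y 1) (Y 1))" and "y2 = Re (rho_ip r (Y 2) (Y 2))"
  define e1 e2 e3 where "e1 = Im (rho_ip r (D 2) (Y 1))" and "e2 = Im (rho_ip r (D 1) (Y 2))"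
    and "e3 = Im (rho_ip r (Y 2) (Y 1))"
  have "rho_ip r (X 2) (X 1) = rho_ip r (D 2 + Y 2) (D 1 + Y 1)"
    by (simp add: Y_def)
  then have "Im (rho_ip r (X 2) (X 1)) - Im (rho_ip r (D 2) (D 1)) = e1 - e2 + e3"
    using Im_rho_ip_commute[OF hermitian_rho D Y, of 2 1]
    by (simp add: rho_ip_bilinear e1_def e2_def e3_def)
  then have "2 * \<alpha> * \<bar>Im (rho_ip r (X 2) (X 1)) - Im (rho_ip r (D 2) (D 1))\<bar>
      \<le> 2 * \<alpha> * \<bar>e1\<bar> + 2 * \<alpha> * \<bar>e2\<bar> + 2 * \<alpha> * \<bar>e3\<bar>"
    using \<open>0 < \<alpha>\<close> mult_left_mono[of "\<bar>e1 - e2 + e3\<bar>" "\<bar>e1\<bar> + \<bar>e2\<bar> + \<bar>e3\<bar>" "2 * \<alpha>"]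
    by (simp add: distrib_left)
  moreover have "2 * \<alpha> * \<bar>e1\<bar> \<le> \<alpha> * \<alpha> * H$2$2 + y1"
    using Im_rho_ip_le[OF density_matrix D Y \<open>0 < \<alpha>\<close>] by (simp add: Re_rho_ip_SLD_duals e1_def y1_def)
  moreover have "2 * \<alpha> * \<bar>e2\<bar> \<le> \<alpha> * \<alpha> * H$1$1 + y2"
    using Im_rho_ip_le[OF density_matrix D Y \<open>0 < \<alpha>\<close>] by (simp add: Re_rho_ip_SLD_duals e2_def y2_def)
  moreover have "2 * \<bar>e3\<bar> \<le> y1 + y2"
    using Im_rho_ip_le[OF density_matrix Y Y, of 1 2 1] by (simp add: e3_def y1_def y2_def)
  then have "2 * \<alpha> * \<bar>e3\<bar> \<le> \<alpha> * y1 + \<alpha> * y2"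
    using mult_left_mono[of "2 * \<bar>e3\<bar>" "y1 + y2" \<alpha>] \<open>0 < \<alpha>\<close> by (simp add: distrib_left)
  moreover have "deviation_sq X = y1 + y2"
    by (simp add: deviation_sq_def y1_def y2_def Y_def)
  ultimately show ?thesis
    by (simp add: distrib_left distrib_right)
qed

text \<open>If \<open>Im Z \<noteq> 0\<close>, a locally unbiased \<open>X\<close> either stays at distance \<open>\<ge> \<delta>\<close> from the SLD
  duals, paying \<open>c \<delta>\<close> in the real part, or is so close that \<open>\<bar>Im Z[X]\<^sub>1\<^sub>2\<bar> \<ge> \<bar>Im Z\<^sub>1\<^sub>2\<bar> / 2\<close>,
  paying in the \<open>TrAbs\<close> part; either way the Holevo function exceeds the SLD bound uniformly.\<close>

lemma holevo_fun_ge_SLD_CR_bound_plus: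
  assumes W: "real_pos_def W" and "ImM (Z_SLD \<rho> \<theta>) \<noteq> 0"
  obtains \<epsilon> where "0 < \<epsilon>"
    "\<And>X. locally_unbiased \<rho> \<theta> X \<Longrightarrow> SLD_CR_bound \<rho> \<theta> W + \<epsilon> \<le> holevo_fun \<rho> \<theta> W X"
proof -
  define A where "A = \<bar>Im (rho_ip r (D 2) (D 1))\<bar>"
  define h where "h = H$1$1 + H$2$2"
  define \<alpha> where "\<alpha> = A / (2 * (h + 1))"
  define \<delta> where "\<delta> = \<alpha> * A / (2 * (1 + \<alpha>))"
  define c where "c = det W / (W$1$1 + W$2$2)"
  define \<sigma> where "\<sigma> = sqrt (det W)"
  have "0 < A"
    using assms(2) ImM_Z_SLD_eq_0_iff by (simp add: A_def)
  have "0 \<le> h"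
    using Re_rho_ip_self_nonneg[OF density_matrix hermitian_SLD_dual]
    by (simp add: h_def Re_rho_ip_SLD_duals add_nonneg_nonneg)
  then have "0 < \<alpha>" "\<alpha> * h \<le> A / 2"
    using \<open>0 < A\<close> by (simp_all add: \<alpha>_def field_simps)
  then have "0 < \<delta>"
    using \<open>0 < A\<close> by (simp add: \<delta>_def)
  have "0 < c" "0 < \<sigma>"
    using real_pos_def_2[OF W] by (simp_all add: c_def \<sigma>_def)
  show ?thesis
  proof
    show "0 < min (c * \<delta>) (\<sigma> * A / 2)"
      using \<open>0 < c\<close> \<open>0 < \<delta>\<close> \<open>0 < \<sigma>\<close> \<open>0 < A\<close> by simp
  next
    fix X assume X: "locally_unbiased \<rho> \<theta> X"
    define b where "b = Im (rho_ip r (X 2) (X 1))"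
    have bound: "SLD_CR_bound \<rho> \<theta> W + c * deviation_sq X + \<sigma> * \<bar>b\<bar> \<le> holevo_fun \<rho> \<theta> W X"
      using holevo_fun_ge[OF W X] by (simp add: c_def \<sigma>_def b_def mult.commute)
    have "0 \<le> deviation_sq X"
      using deviation_sq_nonneg[OF X] .
    consider "\<delta> \<le> deviation_sq X" | "deviation_sq X < \<delta>"
      by linarith
    then have "min (c * \<delta>) (\<sigma> * A / 2) \<le> c * deviation_sq X + \<sigma> * \<bar>b\<bar>"
    proof cases
      case 1
      then have "c * \<delta> \<le> c * deviation_sq X"
        using \<open>0 < c\<close> by simp
      then show ?thesis
        using \<open>0 < \<sigma>\<close> by (simp add: min_le_iff_disj add_increasing2)
    next
      case 2
      have "(1 + \<alpha>) * deviation_sq X < (1 + \<alpha>) * \<delta>"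
        using 2 \<open>0 < \<alpha>\<close> by simp
      also have "(1 + \<alpha>) * \<delta> = \<alpha> * A / 2"
        using \<open>0 < \<alpha>\<close> by (simp add: \<delta>_def field_simps)
      finally have "2 * \<alpha> * \<bar>b - Im (rho_ip r (D 2) (D 1))\<bar> < \<alpha> * (\<alpha> * h) + \<alpha> * A / 2"
        using Im_rho_ip_locally_unbiased_le[OF X \<open>0 < \<alpha>\<close>] by (simp add: b_def h_def mult.assoc)
      also have "\<alpha> * (\<alpha> * h) \<le> \<alpha> * (A / 2)"
        using \<open>\<alpha> * h \<le> A / 2\<close> \<open>0 < \<alpha>\<close> by simp
      finally have "\<bar>b - Im (rho_ip r (D 2) (D 1))\<bar> < A / 2"
        using \<open>0 < \<alpha>\<close> by simp
      then have "A / 2 \<le> \<bar>b\<bar>"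
        unfolding A_def by arith
      then have "\<sigma> * (A / 2) \<le> \<sigma> * \<bar>b\<bar>"
        using \<open>0 < \<sigma>\<close> by simp
      then show ?thesis
        using \<open>0 < c\<close> \<open>0 \<le> deviation_sq X\<close> by (simp add: min_le_iff_disj add_increasing)
    qed
    with bound show "SLD_CR_bound \<rho> \<theta> W + min (c * \<delta>) (\<sigma> * A / 2) \<le> holevo_fun \<rho> \<theta> W X"
      by linarith
  qed
qed

lemma holevo_bound_eq_SLD_CR_bound_iff:
  assumes W: "real_pos_def W"
  shows "holevo_bound \<rho> \<theta> W = SLD_CR_bound \<rho> \<theta> W \<longleftrightarrow> ImM (Z_SLD \<rho> \<theta>) = 0"
proof
  assume eq: "holevo_bound \<rho> \<theta> W = SLD_CR_bound \<rho> \<theta> W"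
  show "ImM (Z_SLD \<rho> \<theta>) = 0"
  proof (rule ccontr)
    assume "ImM (Z_SLD \<rho> \<theta>) \<noteq> 0"
    then obtain \<epsilon> where "0 < \<epsilon>"
      and gap: "\<And>X. locally_unbiased \<rho> \<theta> X \<Longrightarrow> SLD_CR_bound \<rho> \<theta> W + \<epsilon> \<le> holevo_fun \<rho> \<theta> W X"
      using holevo_fun_ge_SLD_CR_bound_plus[OF W] by blast
    have "SLD_CR_bound \<rho> \<theta> W + \<epsilon> \<le> holevo_bound \<rho> \<theta> W"
      unfolding holevo_bound_def
      using locally_unbiased_SLD_dual gap by (intro cInf_greatest) auto
    with eq \<open>0 < \<epsilon>\<close> show False
      by simp
  qed
next
  assume "ImM (Z_SLD \<rho> \<theta>) = 0"
  then have "holevo_fun \<rho> \<theta> W D = SLD_CR_bound \<rho> \<theta> W"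
    by (simp add: holevo_fun_SLD_dual TrAbs_0)
  moreover have "SLD_CR_bound \<rho> \<theta> W \<le> holevo_fun \<rho> \<theta> W X" if "locally_unbiased \<rho> \<theta> X" for X
    using holevo_fun_ge[OF W that] deviation_sq_nonneg[OF that] real_pos_def_2[OF W]
    by (smt (verit) divide_nonneg_pos mult_nonneg_nonneg abs_ge_zero real_sqrt_ge_zero)
  ultimately show "holevo_bound \<rho> \<theta> W = SLD_CR_bound \<rho> \<theta> W"
    unfolding holevo_bound_def using locally_unbiased_SLD_dual
    by (intro cInf_eq_minimum) (force, blast)
qed

end

lemma real_pos_def_mat_1: "real_pos_def (mat 1)"
  by (simp add: real_pos_def_def inner_gt_zero_iff)

theorem proposition3:
  fixes \<Theta> :: "(real^2) set" and \<rho> :: "real^2 \<Rightarrow> complex^2^2" and \<theta> :: "real^2"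
  assumes "regular_qubit_model \<Theta> \<rho>" and "\<theta> \<in> \<Theta>"
  shows "((\<forall>W. real_pos_def W \<longrightarrow> holevo_bound \<rho> \<theta> W = SLD_CR_bound \<rho> \<theta> W)
           \<longleftrightarrow> ImM (Z_SLD \<rho> \<theta>) = 0)
       \<and> (ImM (Z_SLD \<rho> \<theta>) = 0
           \<longleftrightarrow> (\<exists>W0. real_pos_def W0 \<and> holevo_bound \<rho> \<theta> W0 = SLD_CR_bound \<rho> \<theta> W0))"
proof -
  interpret regular_qubit_model_at \<Theta> \<rho> \<theta>
    using assms by unfold_locales
  show ?thesis
    using holevo_bound_eq_SLD_CR_bound_iff real_pos_def_mat_1 by blast
qed

end
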